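(* Let $(M,d)$ be a metric space and let $T:M\to M$ be a surjective mapping such that $$\inf_{n\ge 1}\ \sup_{x\in M} d(T^{n+1}x,T^{n}x)=0.$$ Then $T$ is the identity mapping on $M$.
   Context: $T^n$ denotes the $n$-fold composition of $T$ with itself. *)

theory Defs
  imports "HOL-Analysis.Analysis"
begin

end

theory Submission
  imports Defs
begin

text \<open>Since every iterate \<open>T ^^ n\<close> is onto, the supremum of
  \<open>d(T(T^n x), T^n x)\<close> over \<open>x\<close> is the displacement \<open>sup_y d(T y, y)\<close>,
  independently of \<open>n\<close>. So the infimum in the hypothesis is that displacement,
  which must therefore vanish.\<close>

lemma SUP_surj_comp:
  assumes "surj g"
  shows "(SUP x. f (g x)) = (SUP y. f y)"
proof -
  have "(SUP x. f (g x)) = Sup (f ` range g)"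
    by (simp add: image_comp)
  then show ?thesis
    using assms by simp
qed

lemma SUP_dist_funpow_Suc_eq:
  fixes T :: "'a::metric_space \<Rightarrow> 'a"
  assumes "surj T"
  shows "(SUP x. ereal (dist ((T ^^ (n+1)) x) ((T ^^ n) x))) = (SUP y. ereal (dist (T y) y))"
  using SUP_surj_comp [OF surj_fn [OF assms, of n], of "\<lambda>y. ereal (dist (T y) y)"]
  by simp

lemma eq_id_if_SUP_dist_zero:
  fixes T :: "'a::metric_space \<Rightarrow> 'a"
  assumes "(SUP y. ereal (dist (T y) y)) = 0"
  shows "T = id"
proof
  fix y
  have "ereal (dist (T y) y) \<le> 0"
    using assms by (metis SUP_upper UNIV_I)
  then show "T y = id y" by simp
qed

theorem lemma2p1:
  fixes T :: "'a::metric_space \<Rightarrow> 'a"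
  assumes "surj T"
    and "(INF n\<in>{1::nat..}. SUP x. ereal (dist ((T ^^ (n+1)) x) ((T ^^ n) x))) = 0"
  shows "T = id"
proof (rule eq_id_if_SUP_dist_zero)
  have "(INF n\<in>{1::nat..}. SUP y. ereal (dist (T y) y)) = 0"
    using assms(2) unfolding SUP_dist_funpow_Suc_eq [OF assms(1)] .
  then show "(SUP y. ereal (dist (T y) y)) = 0"
    by simp
qed

end
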